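(* Let $n\ge1$, $\bar M_0=\{u\in\mathbb{C}^{n+2}\mid u_1\cdots u_{n+2}=1,\ u_1+\cdots+u_{n+2}=0\}$, and $\varpi:\bar M_0\to\mathbb{C}^\times$, $\varpi(u)=u_1$. The critical values of $\varpi$ are exactly the $n+2$ solutions $u_1$ of the equation $$u_1^{n+2}=(-1)^{n+1}(n+1)^{n+1}.$$ *)

theory Defs
  imports Complex_Main
begin

(* Points of C^(n+2) are encoded as functions u :: nat => complex with support in {0..n+1};
   coordinate u_k of the paper is u (k-1). *)

definition M0 :: "nat \<Rightarrow> (nat \<Rightarrow> complex) set" where
  "M0 n = {u. (\<forall>i>n+1. u i = 0) \<and> (\<Prod>i\<le>n+1. u i) = 1 \<and> (\<Sum>i\<le>n+1. u i) = 0}"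

(* Tangent space of M0 at u: kernel of the differential of the defining equations
   (u_1 ... u_{n+2} - 1, u_1 + ... + u_{n+2}); the derivative of the product is written out. *)
definition tangent_M0 :: "nat \<Rightarrow> (nat \<Rightarrow> complex) \<Rightarrow> (nat \<Rightarrow> complex) set" where
  "tangent_M0 n u = {v. (\<forall>i>n+1. v i = 0)
      \<and> (\<Sum>i\<le>n+1. v i * (\<Prod>j\<in>{..n+1}-{i}. u j)) = 0
      \<and> (\<Sum>i\<le>n+1. v i) = 0}"

(* varpi(u) = u_1; its differential is v |-> v_1.  u is a critical point iff the
   differential vanishes on the tangent space. *)
definition critical_point_varpi :: "nat \<Rightarrow> (nat \<Rightarrow> complex) \<Rightarrow> bool" where
  "critical_point_varpi n u \<longleftrightarrow> u \<in> M0 n \<and> (\<forall>v\<in>tangent_M0 n u. v 0 = 0)"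

definition critical_values_varpi :: "nat \<Rightarrow> complex set" where
  "critical_values_varpi n = {u 0 | u. critical_point_varpi n u}"

end

theory Submission
  imports Defs
begin

text \<open>On \<open>M0 n\<close> all coordinates are nonzero, so the tangent equations read
  \<open>\<Sum> v\<^sub>i = 0\<close> and \<open>\<Sum> v\<^sub>i / u\<^sub>i = 0\<close>. The differential \<open>v \<mapsto> v\<^sub>1\<close> vanishes on this
  kernel exactly when \<open>u\<^sub>2 = \<dots> = u\<^sub>n\<^sub>+\<^sub>2 = c\<close>: if two of these coordinates differ, a tangent
  vector supported on \<open>u\<^sub>1\<close> and those two has \<open>v\<^sub>1 \<noteq> 0\<close>. For such points the defining equations
  become \<open>u\<^sub>1 = -(n+1) c\<close> and \<open>u\<^sub>1 c\<^sup>n\<^sup>+\<^sup>1 = 1\<close>, and eliminating \<open>c\<close> gives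
  \<open>u\<^sub>1\<^sup>n\<^sup>+\<^sup>2 = (-(n+1))\<^sup>n\<^sup>+\<^sup>1\<close>, a polynomial equation with \<open>n+2\<close> distinct roots.\<close>

lemma M0_coordinate_nonzero:
  assumes "u \<in> M0 n" "k \<le> n+1"
  shows "u k \<noteq> 0"
proof
  assume "u k = 0"
  hence "(\<Prod>i\<le>n+1. u i) = 0" using assms(2) by (intro prod_zero) auto
  with assms(1) show False by (simp add: M0_def)
qed

lemma tangent_M0_iff:
  assumes "u \<in> M0 n"
  shows "v \<in> tangent_M0 n u \<longleftrightarrow>
           (\<forall>i>n+1. v i = 0) \<and> (\<Sum>i\<le>n+1. v i / u i) = 0 \<and> (\<Sum>i\<le>n+1. v i) = 0"
proof -
  have "(\<Prod>j\<in>{..n+1}-{i}. u j) = 1 / u i" if "i \<le> n+1" for i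
  proof -
    have "u i * (\<Prod>j\<in>{..n+1}-{i}. u j) = (\<Prod>j\<le>n+1. u j)"
      using that by (intro prod.remove[symmetric]) auto
    also have "\<dots> = 1" using assms by (simp add: M0_def)
    finally show ?thesis using M0_coordinate_nonzero[OF assms that] by (simp add: field_simps)
  qed
  hence "(\<Sum>i\<le>n+1. v i * (\<Prod>j\<in>{..n+1}-{i}. u j)) = (\<Sum>i\<le>n+1. v i / u i)"
    by (intro sum.cong) auto
  thus ?thesis unfolding tangent_M0_def by auto
qed

lemma critical_point_varpi_imp_tail_constant:
  assumes crit: "critical_point_varpi n u" and i: "1 \<le> i" "i \<le> n+1"
  shows "u i = u 1"
proof (rule ccontr)
  assume ne: "u i \<noteq> u 1"
  have M: "u \<in> M0 n" using crit by (simp add: critical_point_varpi_def)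
  have i01: "i \<noteq> 0" "i \<noteq> 1" using i ne by auto
  have nz: "u 0 \<noteq> 0" "u 1 \<noteq> 0" "u i \<noteq> 0" using M0_coordinate_nonzero[OF M] i by auto
  have d: "1 / u i - 1 / u 1 \<noteq> 0" using ne nz by (simp add: field_simps)
  define a where "a = (1 / u 1 - 1 / u 0) / (1 / u i - 1 / u 1)"
  define v where "v = (\<lambda>k. if k = 0 then 1 else if k = i then a else if k = 1 then -1 - a else 0)"
  have sum_three: "(\<Sum>k\<le>n+1. f k) = f 0 + f 1 + f i" if "\<And>k. v k = 0 \<Longrightarrow> f k = 0" for f :: "nat \<Rightarrow> complex"
  proof -
    have "(\<Sum>k\<le>n+1. f k) = (\<Sum>k\<in>{0,1,i}. f k)"
      using i that by (intro sum.mono_neutral_right) (auto simp: v_def)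
    thus ?thesis using i01 by (simp add: add.assoc)
  qed
  have "(\<Sum>k\<le>n+1. v k) = 0"
    using i01 by (subst sum_three) (auto simp: v_def)
  moreover have "(\<Sum>k\<le>n+1. v k / u k) = 0"
  proof -
    have "(\<Sum>k\<le>n+1. v k / u k) = 1 / u 0 + (-1 - a) / u 1 + a / u i"
      using i01 by (subst sum_three) (auto simp: v_def)
    also have "\<dots> = 1 / u 0 - 1 / u 1 + a * (1 / u i - 1 / u 1)"
      using nz by (simp add: field_simps)
    also have "\<dots> = 0" using d by (simp add: a_def)
    finally show ?thesis .
  qed
  ultimately have "v \<in> tangent_M0 n u"
    using i tangent_M0_iff[OF M] by (auto simp: v_def)
  with crit have "v 0 = 0" by (simp add: critical_point_varpi_def)
  thus False by (simp add: v_def)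
qed

lemma M0_tail_constant_iff:
  assumes tail: "\<forall>i\<in>{1..n+1}. u i = c" and support: "\<forall>i>n+1. u i = 0"
  shows "u \<in> M0 n \<longleftrightarrow> u 0 = - of_nat (n+1) * c \<and> u 0 * c ^ (n+1) = 1"
proof -
  have "(\<Sum>i\<le>n+1. u i) = u 0 + (\<Sum>i\<le>n. u (Suc i))"
    by (simp add: sum.atMost_Suc_shift del: sum.atMost_Suc)
  also have "\<dots> = u 0 + of_nat (n+1) * c" using tail by simp
  finally have sum_eq: "(\<Sum>i\<le>n+1. u i) = u 0 + of_nat (n+1) * c" .
  have "(\<Sum>i\<le>n+1. u i) = 0 \<longleftrightarrow> u 0 = - of_nat (n+1) * c"
    by (simp only: sum_eq mult_minus_left eq_neg_iff_add_eq_0)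
  moreover have "(\<Prod>i\<le>n+1. u i) = u 0 * c ^ (n+1)"
    using tail by (simp add: prod.atMost_Suc_shift del: prod.atMost_Suc)
  ultimately show ?thesis using support by (auto simp: M0_def)
qed

lemma critical_point_varpi_iff:
  "critical_point_varpi n u \<longleftrightarrow> u \<in> M0 n \<and> (\<exists>c. \<forall>i\<in>{1..n+1}. u i = c)"
proof
  assume crit: "critical_point_varpi n u"
  have "\<forall>i\<in>{1..n+1}. u i = u 1"
    using critical_point_varpi_imp_tail_constant[OF crit] atLeastAtMost_iff by blast
  with crit show "u \<in> M0 n \<and> (\<exists>c. \<forall>i\<in>{1..n+1}. u i = c)"
    unfolding critical_point_varpi_def by blast
next
  assume "u \<in> M0 n \<and> (\<exists>c. \<forall>i\<in>{1..n+1}. u i = c)"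
  then obtain c where M: "u \<in> M0 n" and tail_c: "\<forall>i\<in>{1..n+1}. u i = c" by blast
  have support: "\<forall>i>n+1. u i = 0" using M by (simp add: M0_def)
  have nz: "u 0 \<noteq> 0" "c \<noteq> 0" using M0_coordinate_nonzero[OF M] tail_c by auto
  have u0: "u 0 = - of_nat (n+1) * c" using M M0_tail_constant_iff[OF tail_c support] by blast
  have "u 0 \<noteq> c"
  proof
    assume "u 0 = c"
    with u0 have "of_nat (n+2) * c = 0" by (simp add: algebra_simps)
    with nz(2) show False
      by (metis mult_eq_0_iff of_nat_eq_0_iff add_eq_0_iff_both_eq_0 zero_neq_numeral)
  qed
  hence gap: "1 / u 0 - 1 / c \<noteq> 0" using nz by (simp add: field_simps)
  have "v 0 = 0" if v: "v \<in> tangent_M0 n u" for v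
  proof -
    let ?t = "\<Sum>i\<le>n. v (Suc i)"
    have "(\<Sum>i\<le>n+1. v i / u i) = v 0 / u 0 + ?t / c"
      using tail_c by (simp add: sum.atMost_Suc_shift sum_divide_distrib del: sum.atMost_Suc)
    moreover have "(\<Sum>i\<le>n+1. v i) = v 0 + ?t"
      by (simp add: sum.atMost_Suc_shift del: sum.atMost_Suc)
    ultimately have "v 0 / u 0 + ?t / c = 0" "?t = - v 0"
      using v tangent_M0_iff[OF M] by (auto simp: eq_neg_iff_add_eq_0 add.commute)
    moreover have "v 0 * (1 / u 0 - 1 / c) = v 0 / u 0 - v 0 / c"
      by (simp add: right_diff_distrib)
    ultimately have "v 0 * (1 / u 0 - 1 / c) = 0" by simp
    thus ?thesis using gap by simp
  qed
  with M show "critical_point_varpi n u" by (simp add: critical_point_varpi_def)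
qed

lemma critical_values_varpi_eq:
  "critical_values_varpi n = {w. \<exists>c. w = - of_nat (n+1) * c \<and> w * c ^ (n+1) = 1}"
proof (intro set_eqI iffI)
  fix w assume "w \<in> critical_values_varpi n"
  then obtain u :: "nat \<Rightarrow> complex" and c where "u \<in> M0 n" "\<forall>i\<in>{1..n+1}. u i = c" "w = u 0"
    by (auto simp: critical_values_varpi_def critical_point_varpi_iff)
  with M0_tail_constant_iff[of n u c]
  show "w \<in> {w. \<exists>c. w = - of_nat (n+1) * c \<and> w * c ^ (n+1) = 1}"
    by (auto simp: M0_def)
next
  fix w :: complex assume "w \<in> {w. \<exists>c. w = - of_nat (n+1) * c \<and> w * c ^ (n+1) = 1}"
  then obtain c where c: "w = - of_nat (n+1) * c" "w * c ^ (n+1) = 1" by blast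
  define u where "u = (\<lambda>i. if i = 0 then w else if i \<le> n+1 then c else 0)"
  have tail_c: "\<forall>i\<in>{1..n+1}. u i = c" and support: "\<forall>i>n+1. u i = 0"
    by (auto simp: u_def)
  have "u 0 = w" by (simp add: u_def)
  moreover from this c have "u \<in> M0 n" by (simp only: M0_tail_constant_iff[OF tail_c support])
  with tail_c have "critical_point_varpi n u" by (auto simp: critical_point_varpi_iff)
  ultimately show "w \<in> critical_values_varpi n"
    unfolding critical_values_varpi_def by blast
qed

lemma eliminate_tail_value:
  fixes w :: complex and N :: nat
  assumes "N > 0"
  shows "(\<exists>c. w = - of_nat N * c \<and> w * c ^ N = 1) \<longleftrightarrow> w ^ (N+1) = (-1) ^ N * of_nat N ^ N"
proof -
  have N: "(of_nat N :: complex) \<noteq> 0" using assms by simp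
  have "(- w / of_nat N) ^ N * ((-1) ^ N * of_nat N ^ N) = ((- w / of_nat N) * (-1) * of_nat N) ^ N"
    by (simp only: power_mult_distrib mult.assoc)
  also have "(- w / of_nat N) * (-1) * of_nat N = w" using N by simp
  finally have key: "w * (- w / of_nat N) ^ N * ((-1) ^ N * of_nat N ^ N) = w ^ (N+1)"
    by (simp add: mult.assoc)
  have "(-1) ^ N * of_nat N ^ N \<noteq> (0::complex)" using N by simp
  hence "w * (- w / of_nat N) ^ N = 1 \<longleftrightarrow> w ^ (N+1) = (-1) ^ N * of_nat N ^ N"
    by (metis key mult_cancel_right1)
  moreover have "w = - of_nat N * c \<longleftrightarrow> c = - w / of_nat N" for c
    using N by (auto simp: field_simps)
  ultimately show ?thesis by auto
qed

theorem mainTheorem9: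
  fixes n :: nat
  assumes "n \<ge> 1"
  shows "critical_values_varpi n =
           {w :: complex. w ^ (n+2) = (-1) ^ (n+1) * (of_nat (n+1)) ^ (n+1)}
         \<and> card (critical_values_varpi n) = n + 2"
proof -
  have critical_values: "critical_values_varpi n =
           {w :: complex. w ^ (n+2) = (-1) ^ (n+1) * (of_nat (n+1)) ^ (n+1)}"
    using eliminate_tail_value[of "n+1"] by (simp add: critical_values_varpi_eq)
  have "(-1) ^ (n+1) * (of_nat (n+1) :: complex) ^ (n+1) \<noteq> 0"
    by (simp del: of_nat_Suc)
  hence "card {w :: complex. w ^ (n+2) = (-1) ^ (n+1) * (of_nat (n+1)) ^ (n+1)} = n+2"
    by (intro card_nth_roots) auto
  with critical_values show ?thesis by simp
qed

end
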